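(* Let $d\ge2$ and let $G$ be a closed convex germ with $\overline{\mathrm{conv}}(\Delta_{\rm e}\cup B_{\rm i})\subseteq G$. If $G$ is not a qplex, then there are uncountably many distinct qplexes containing $G$.
   Context: Fix an integer $d\ge 2$. $\langle\cdot,\cdot\rangle$ is the standard inner product on $\mathbb{R}^{d^2}$, $\|\cdot\|$ the Euclidean norm. $\Delta=\{p\in\mathbb{R}^{d^2}: p(i)\ge0,\ \sum_ip(i)=1\}$; $H=\{u\in\mathbb{R}^{d^2}:\sum_i u(i)=1\}$; $c=(1/d^2,\dots,1/d^2)$. $\overline{\mathrm{conv}}(X)$ denotes the closed convex hull. For $A\subseteq H$ the polar is $A^*=\{u\in H:\langle u,v\rangle\ge\frac{1}{d(d+1)}\ \forall v\in A\}$. Out-ball: $B_{\rm o}=\{u\in H:\|u-c\|\le r_{\rm o}\}$, $r_{\rm o}^2=\frac{d-1}{d^2(d+1)}$. In-ball: $B_{\rm i}=\{u\in H:\|u-c\|\le r_{\rm i}\}$, $r_{\rm i}^2=\frac{1}{d^2(d^2-1)}$. Basis distributions: $e_k(i)=\frac{1}{d+1}(\delta_{ki}+\frac1d)$; basis simplex $\Delta_{\rm e}=\mathrm{conv}\{e_1,\dots,e_{d^2}\}$. A subset $A\subseteq\Delta$ is a germ if $\frac{1}{d(d+1)}\le\langle p,s\rangle\le\frac{2}{d(d+1)}$ for all $p,s\in A$. A qplex is a set $Q\subseteq\Delta\cap B_{\rm o}$ with $Q^*=Q$. *)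

theory Defs
  imports "HOL-Analysis.Analysis"
begin

text \<open>Points of R^(d^2) are vectors real^'n with CARD('n) = d^2 (assumed in the theorem).
  The parameter d :: nat is passed explicitly.\<close>

definition prob_simplex :: "(real^'n::finite) set" where
  "prob_simplex = {p. (\<forall>i. 0 \<le> p $ i) \<and> (\<Sum>i\<in>UNIV. p $ i) = 1}"

definition hyp :: "(real^'n::finite) set" where
  "hyp = {u. (\<Sum>i\<in>UNIV. u $ i) = 1}"

definition centre :: "nat \<Rightarrow> real^'n::finite" where
  "centre d = (\<chi> i. 1 / (real d)^2)"

definition polar :: "nat \<Rightarrow> (real^'n::finite) set \<Rightarrow> (real^'n) set" where
  "polar d A = {u \<in> hyp. \<forall>v\<in>A. 1 / (real d * (real d + 1)) \<le> inner u v}"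

definition out_ball :: "nat \<Rightarrow> (real^'n::finite) set" where
  "out_ball d = {u \<in> hyp. norm (u - centre d) \<le> sqrt ((real d - 1) / ((real d)^2 * (real d + 1)))}"

definition in_ball :: "nat \<Rightarrow> (real^'n::finite) set" where
  "in_ball d = {u \<in> hyp. norm (u - centre d) \<le> sqrt (1 / ((real d)^2 * ((real d)^2 - 1)))}"

definition basis_dist :: "nat \<Rightarrow> 'n::finite \<Rightarrow> real^'n" where
  "basis_dist d k = (\<chi> i. (1 / (real d + 1)) * ((if k = i then 1 else 0) + 1 / real d))"

definition basis_simplex :: "nat \<Rightarrow> (real^'n::finite) set" where
  "basis_simplex d = convex hull (range (basis_dist d))"

definition closed_conv :: "(real^'n::finite) set \<Rightarrow> (real^'n) set" where
  "closed_conv X = closure (convex hull X)"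

definition germ :: "nat \<Rightarrow> (real^'n::finite) set \<Rightarrow> bool" where
  "germ d A \<longleftrightarrow> A \<subseteq> prob_simplex \<and>
     (\<forall>p\<in>A. \<forall>s\<in>A. 1 / (real d * (real d + 1)) \<le> inner p s
                    \<and> inner p s \<le> 2 / (real d * (real d + 1)))"

definition qplex :: "nat \<Rightarrow> (real^'n::finite) set \<Rightarrow> bool" where
  "qplex d Q \<longleftrightarrow> Q \<subseteq> prob_simplex \<inter> out_ball d \<and> polar d Q = Q"

end

theory Submission
  imports Defs
begin

text \<open>A germ G containing the in-ball satisfies \<open>G \<subseteq> G\<^sup>* \<subseteq> B\<^sub>o\<close>, so G fails to be a
  qplex exactly when some u lies in \<open>G\<^sup>* - G\<close>. The segment from the centre c to u lies in the
  convex set \<open>G\<^sup>*\<close>, and its points \<open>x\<^sub>s\<close> with s close to 1 avoid the closed set G.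
  Separating such an \<open>x\<^sub>s\<close> from G and rescaling gives \<open>w \<in> G\<^sup>*\<close> with
  \<open>\<langle>w, x\<^sub>s\<rangle> = 1/(d(d+1))\<close> and \<open>\<langle>w, x\<^sub>t\<rangle> < 1/(d(d+1))\<close> for \<open>t > s\<close>. A maximal germ
  containing G, \<open>x\<^sub>s\<close> and w (Zorn) is self-polar, hence a qplex that contains \<open>x\<^sub>s\<close> but no
  \<open>x\<^sub>t\<close> with \<open>t > s\<close>. Distinct parameters s therefore give distinct qplexes, and there are
  uncountably many of them.\<close>

lemma out_radius_sq_eq:
  fixes r :: real
  assumes "r > 0"
  shows "(r - 1) / (r^2 * (r + 1)) = 2 / (r * (r + 1)) - 1 / r^2"
proof -
  have "r \<noteq> 0" "r + 1 \<noteq> 0" using assms by auto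
  then show ?thesis by (simp add: divide_simps power2_eq_square)
qed

lemma centre_gap_eq:
  fixes r :: real
  assumes "r > 0"
  shows "1 / r^2 - 1 / (r * (r + 1)) = 1 / (r^2 * (r + 1))"
proof -
  have "r \<noteq> 0" "r + 1 \<noteq> 0" using assms by auto
  then show ?thesis by (simp add: divide_simps power2_eq_square)
qed

lemma centre_gap_sq_div_in_radius_sq:
  fixes r :: real
  assumes "r > 1"
  shows "(1 / (r^2 * (r + 1)))^2 / (1 / (r^2 * (r^2 - 1))) = (r - 1) / (r^2 * (r + 1))"
proof -
  have "r \<noteq> 0" "r + 1 \<noteq> 0" "r^2 - 1 = (r - 1) * (r + 1)"
    using assms by (auto simp: algebra_simps power2_eq_square)
  then show ?thesis by (simp add: divide_simps power2_eq_square)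
qed

lemma pos_if_CARD_eq_sq:
  assumes "CARD('n::finite) = d^2"
  shows "d > 0"
  using finite_UNIV_card_ge_0[where 'a='n] assms by (cases d) auto

lemma hyp_eq_hyperplane: "hyp = {u :: real^'n::finite. inner (\<chi> i. 1) u = 1}"
  by (simp add: hyp_def inner_vec_def)

lemma affine_hyp: "affine (hyp :: (real^'n::finite) set)"
  unfolding hyp_eq_hyperplane by (rule affine_hyperplane)

lemma centre_in_hyp:
  assumes "CARD('n) = d^2"
  shows "(centre d :: real^'n::finite) \<in> hyp"
  using assms pos_if_CARD_eq_sq[OF assms] by (simp add: centre_def hyp_def)

lemma inner_centre_hyp:
  assumes "x \<in> hyp"
  shows "inner (centre d) (x :: real^'n::finite) = 1 / (real d)^2"
  using assms unfolding centre_def inner_vec_def hyp_def by (simp add: sum_divide_distrib[symmetric])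

lemma inner_hyp_centred:
  assumes "CARD('n) = d^2" "u \<in> hyp" "p \<in> hyp"
  shows "inner u (p :: real^'n::finite) = 1 / (real d)^2 + inner (u - centre d) (p - centre d)"
  using inner_centre_hyp[OF assms(2)] inner_centre_hyp[OF assms(3)]
    inner_centre_hyp[OF centre_in_hyp[OF assms(1)]]
  by (simp add: inner_diff_left inner_diff_right inner_commute)

lemma inner_self_hyp_ge:
  assumes "CARD('n) = d^2" "u \<in> hyp"
  shows "1 / (real d * (real d + 1)) \<le> inner u (u :: real^'n::finite)"
proof -
  have "1 / (real d)^2 - 1 / (real d * (real d + 1)) = 1 / ((real d)^2 * (real d + 1))"
    using pos_if_CARD_eq_sq[OF assms(1)] by (intro centre_gap_eq) simp
  moreover have "0 \<le> 1 / ((real d)^2 * (real d + 1))" by simp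
  ultimately have "1 / (real d * (real d + 1)) \<le> 1 / (real d)^2" by linarith
  also have "\<dots> \<le> inner u u"
    using inner_hyp_centred[OF assms(1,2,2)] by simp
  finally show ?thesis .
qed

lemma centre_in_in_ball:
  assumes "CARD('n) = d^2"
  shows "(centre d :: real^'n::finite) \<in> in_ball d"
proof -
  have "(real d)^2 \<ge> 1" using pos_if_CARD_eq_sq[OF assms] by simp
  then show ?thesis using centre_in_hyp[OF assms] by (simp add: in_ball_def)
qed

lemma centre_ray_in_hyp:
  assumes "CARD('n) = d^2" "u \<in> hyp"
  shows "centre d + t *\<^sub>R (u - centre d) \<in> (hyp :: (real^'n::finite) set)"
proof -
  have "centre d + t *\<^sub>R (u - centre d) = (1 - t) *\<^sub>R centre d + t *\<^sub>R u"
    by (simp add: algebra_simps)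
  then show ?thesis
    using mem_affine[OF affine_hyp centre_in_hyp[OF assms(1)] assms(2)] by simp
qed

lemma hyp_represents_affine_functional:
  assumes "CARD('n) = d^2"
  obtains w :: "real^'n::finite"
  where "w \<in> hyp" "\<And>x. x \<in> hyp \<Longrightarrow> inner w x = 1 / (real d)^2 + r * (inner a x - inner a (centre d))"
proof
  define a0 where "a0 = a - (\<chi> i. inner a (centre d))"
  have sum_a0: "(\<Sum>i\<in>UNIV. a0 $ i) = 0"
    using assms pos_if_CARD_eq_sq[OF assms] by (simp add: a0_def sum_subtractf centre_def inner_vec_def
        sum_divide_distrib[symmetric])
  show "centre d + r *\<^sub>R a0 \<in> hyp"
    using centre_in_hyp[OF assms] sum_a0 by (simp add: hyp_def sum.distrib sum_distrib_left[symmetric])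
  fix x :: "real^'n" assume "x \<in> hyp"
  then have "inner (\<chi> i. inner a (centre d)) x = inner a (centre d)"
    by (simp add: inner_vec_def sum_distrib_left[symmetric] hyp_def)
  then have "inner a0 x = inner a x - inner a (centre d)"
    by (simp add: a0_def inner_diff_left)
  with inner_centre_hyp[OF \<open>x \<in> hyp\<close>]
  show "inner (centre d + r *\<^sub>R a0) x = 1 / (real d)^2 + r * (inner a x - inner a (centre d))"
    by (simp add: inner_add_left)
qed

lemma hyp_in_out_ball:
  assumes "CARD('n) = d^2" "u \<in> hyp"
    and "inner u u \<le> 2 / (real d * (real d + 1))"
  shows "(u :: real^'n::finite) \<in> out_ball d"
proof -
  have "(norm (u - centre d))^2 = inner u u - 1 / (real d)^2"
    using inner_hyp_centred[OF assms(1,2,2)] by (simp add: power2_norm_eq_inner)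
  also have "\<dots> \<le> 2 / (real d * (real d + 1)) - 1 / (real d)^2"
    using assms(3) by linarith
  also have "\<dots> = (real d - 1) / ((real d)^2 * (real d + 1))"
    using pos_if_CARD_eq_sq[OF assms(1)] by (intro out_radius_sq_eq[symmetric]) simp
  finally show ?thesis
    using assms(2) by (simp add: out_ball_def real_le_rsqrt)
qed

lemma polar_antimono: "A \<subseteq> B \<Longrightarrow> polar d B \<subseteq> polar d A"
  unfolding polar_def by auto

lemma convex_polar: "convex (polar d (A :: (real^'n::finite) set))"
proof -
  have "polar d A = hyp \<inter> (\<Inter>v\<in>A. {u. inner v u \<ge> 1 / (real d * (real d + 1))})"
    by (auto simp: polar_def inner_commute)
  then show ?thesis
    using affine_imp_convex[OF affine_hyp] by (auto intro!: convex_Int convex_INT convex_halfspace_ge)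
qed

lemma germ_subset_polar: "germ d A \<Longrightarrow> A \<subseteq> polar d A"
  unfolding germ_def polar_def prob_simplex_def hyp_def by auto

lemma germ_subset_out_ball:
  assumes "CARD('n) = d^2" "germ d (A :: (real^'n::finite) set)"
  shows "A \<subseteq> prob_simplex \<inter> out_ball d"
proof
  fix p assume "p \<in> A"
  with assms(2) have "p \<in> prob_simplex" "inner p p \<le> 2 / (real d * (real d + 1))"
    by (auto simp: germ_def)
  moreover from this have "p \<in> hyp" by (simp add: prob_simplex_def hyp_def)
  ultimately show "p \<in> prob_simplex \<inter> out_ball d"
    using hyp_in_out_ball[OF assms(1)] by blast
qed

lemma inner_basis_dist:
  assumes "u \<in> hyp"
  shows "inner u (basis_dist d k) = ((u :: real^'n::finite) $ k + 1 / real d) / (real d + 1)"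
proof -
  have "inner u (basis_dist d k)
      = (\<Sum>i\<in>UNIV. (if i = k then u $ i else 0) + u $ i / real d) / (real d + 1)"
    unfolding basis_dist_def inner_vec_def sum_divide_distrib
    by (rule sum.cong) (auto simp: field_simps)
  also have "\<dots> = (u $ k + 1 / real d) / (real d + 1)"
    using assms by (simp add: sum.distrib hyp_def sum_divide_distrib[symmetric])
  finally show ?thesis .
qed

lemma polar_subset_prob_simplex:
  assumes "range (basis_dist d) \<subseteq> G"
  shows "polar d G \<subseteq> (prob_simplex :: (real^'n::finite) set)"
proof
  fix u :: "real^'n" assume u: "u \<in> polar d G"
  then have hyp: "u \<in> hyp" by (simp add: polar_def)
  have "0 \<le> u $ k" for k
  proof -
    have "basis_dist d k \<in> G" using assms by blast
    then have "1 / (real d * (real d + 1)) \<le> inner u (basis_dist d k)"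
      using u by (simp add: polar_def)
    also have "\<dots> = (u $ k + 1 / real d) / (real d + 1)"
      by (rule inner_basis_dist[OF hyp])
    also have "\<dots> = u $ k / (real d + 1) + 1 / (real d * (real d + 1))"
      by (simp add: add_divide_distrib)
    finally show ?thesis by (simp add: zero_le_divide_iff add_nonneg_pos)
  qed
  with hyp show "u \<in> prob_simplex" by (simp add: prob_simplex_def hyp_def)
qed

text \<open>Testing u against the point of the in-ball opposite to u gives
  \<open>r\<^sub>i \<parallel>u - c\<parallel> \<le> 1/d\<^sup>2 - 1/(d(d+1))\<close>, and \<open>(1/d\<^sup>2 - 1/(d(d+1)))\<^sup>2 / r\<^sub>i\<^sup>2 = r\<^sub>o\<^sup>2\<close>.\<close>
lemma polar_dist_centre_sq_le:
  fixes u :: "real^'n::finite"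
  assumes "CARD('n) = d^2" "d \<ge> 2" "in_ball d \<subseteq> G" "u \<in> polar d G"
  shows "(norm (u - centre d))^2 \<le> (real d - 1) / ((real d)^2 * (real d + 1))"
proof (cases "u = centre d")
  case True
  then show ?thesis using assms(2) by simp
next
  case False
  define x where "x = u - centre d"
  define ri where "ri = sqrt (1 / ((real d)^2 * ((real d)^2 - 1)))"
  define p where "p = centre d + (- ri / norm x) *\<^sub>R x"
  have d: "real d > 1" using assms(2) by simp
  then have "(real d)^2 > 1" by simp
  then have "(real d)^2 * ((real d)^2 - 1) > 0" using d by (intro mult_pos_pos) auto
  then have ri: "ri > 0" "ri^2 = 1 / ((real d)^2 * ((real d)^2 - 1))"
    by (simp_all add: ri_def)
  have hyp: "u \<in> hyp" using assms(4) by (simp add: polar_def)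
  have "p \<in> hyp"
    using centre_ray_in_hyp[OF assms(1) hyp, of "- ri / norm x"] by (simp add: p_def x_def)
  moreover have "norm (p - centre d) = ri"
    using False ri by (simp add: p_def x_def)
  ultimately have "p \<in> in_ball d"
    by (simp add: in_ball_def ri_def)
  then have "p \<in> G"
    using assms(3) by blast
  then have "1 / (real d * (real d + 1)) \<le> inner u p"
    using assms(4) by (simp add: polar_def)
  also have "\<dots> = 1 / (real d)^2 - ri * norm x"
    using inner_hyp_centred[OF assms(1) hyp \<open>p \<in> hyp\<close>] False
    by (simp add: p_def x_def dot_square_norm power2_eq_square)
  finally have "ri * norm x \<le> 1 / (real d)^2 - 1 / (real d * (real d + 1))" by simp
  also have "\<dots> = 1 / ((real d)^2 * (real d + 1))"
    using d by (intro centre_gap_eq) simp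
  finally have "(ri * norm x)^2 \<le> (1 / ((real d)^2 * (real d + 1)))^2"
    using ri by (intro power_mono) auto
  then have "(norm x)^2 \<le> (1 / ((real d)^2 * (real d + 1)))^2 / ri^2"
    using ri(1) by (simp add: power_mult_distrib pos_le_divide_eq mult.commute)
  also have "\<dots> = (real d - 1) / ((real d)^2 * (real d + 1))"
    unfolding ri(2) using d by (rule centre_gap_sq_div_in_radius_sq)
  finally show ?thesis by (simp add: x_def)
qed

lemma polar_inner_le:
  assumes "CARD('n) = d^2" "d \<ge> 2" "in_ball d \<subseteq> G" "u \<in> polar d G" "p \<in> polar d G"
  shows "inner u (p :: real^'n::finite) \<le> 2 / (real d * (real d + 1))"
proof -
  define R where "R = (real d - 1) / ((real d)^2 * (real d + 1))"
  define a where "a = norm (u - centre d)"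
  define b where "b = norm (p - centre d)"
  have "a^2 \<le> R" "b^2 \<le> R"
    using polar_dist_centre_sq_le[OF assms(1-3)] assms(4,5) by (simp_all add: a_def b_def R_def)
  moreover have "2 * a * b \<le> a^2 + b^2"
    using sum_squares_bound .
  ultimately have "a * b \<le> R" by linarith
  have "inner u p = 1 / (real d)^2 + inner (u - centre d) (p - centre d)"
    using inner_hyp_centred[OF assms(1), of u p] assms(4,5) by (simp add: polar_def)
  also have "\<dots> \<le> 1 / (real d)^2 + R"
    using norm_cauchy_schwarz[of "u - centre d" "p - centre d"] \<open>a * b \<le> R\<close>
    by (simp add: a_def b_def)
  also have "\<dots> = 2 / (real d * (real d + 1))"
    using assms(2) out_radius_sq_eq[of "real d"] by (simp add: R_def)
  finally show ?thesis .
qed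

lemma germ_if_subset_polar:
  assumes "CARD('n) = d^2" "d \<ge> 2" "in_ball d \<subseteq> G" "range (basis_dist d) \<subseteq> G"
    and "A \<subseteq> polar d G"
    and "\<And>p q. p \<in> A \<Longrightarrow> q \<in> A \<Longrightarrow> 1 / (real d * (real d + 1)) \<le> inner p q"
  shows "germ d (A :: (real^'n::finite) set)"
  unfolding germ_def
proof (intro conjI ballI)
  show "A \<subseteq> prob_simplex"
    using assms(5) polar_subset_prob_simplex[OF assms(4)] by auto
  fix p q assume "p \<in> A" "q \<in> A"
  then show "1 / (real d * (real d + 1)) \<le> inner p q"
    by (rule assms(6))
  from \<open>p \<in> A\<close> \<open>q \<in> A\<close> show "inner p q \<le> 2 / (real d * (real d + 1))"
    using assms(5) by (intro polar_inner_le[OF assms(1-3)]) auto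
qed

lemma maximal_germ_exists:
  assumes "germ d A"
  obtains M where "germ d M" "A \<subseteq> M" "\<And>X. germ d X \<Longrightarrow> M \<subseteq> X \<Longrightarrow> X = M"
proof -
  let ?S = "{B. germ d B \<and> A \<subseteq> B}"
  have "\<exists>M\<in>?S. \<forall>X\<in>?S. M \<subseteq> X \<longrightarrow> X = M"
  proof (rule subset_Zorn_nonempty)
    show "?S \<noteq> {}" using assms by blast
  next
    fix C assume C: "C \<noteq> {}" "subset.chain ?S C"
    have "germ d (\<Union>C)"
      unfolding germ_def
    proof (intro conjI ballI)
      show "\<Union>C \<subseteq> prob_simplex" using C(2) by (auto simp: germ_def subset_chain_def)
      fix p q assume "p \<in> \<Union>C" "q \<in> \<Union>C"
      then obtain X Y where XY: "X \<in> C" "Y \<in> C" "p \<in> X" "q \<in> Y" by blast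
      moreover have "X \<subseteq> Y \<or> Y \<subseteq> X" using C(2) XY(1,2) by (simp add: subset_chain_def)
      ultimately obtain Z where "Z \<in> C" "p \<in> Z" "q \<in> Z" by blast
      moreover have "germ d Z" using C(2) \<open>Z \<in> C\<close> by (auto simp: subset_chain_def)
      ultimately show "1 / (real d * (real d + 1)) \<le> inner p q"
        "inner p q \<le> 2 / (real d * (real d + 1))"
        unfolding germ_def by auto
    qed
    moreover have "A \<subseteq> \<Union>C" using C unfolding subset_chain_def by blast
    ultimately show "\<Union>C \<in> ?S" by blast
  qed
  then obtain M where M: "germ d M" "A \<subseteq> M"
    and max: "\<And>X. germ d X \<Longrightarrow> A \<subseteq> X \<Longrightarrow> M \<subseteq> X \<Longrightarrow> X = M"
    by auto
  show ?thesis
  proof (rule that[OF M])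
    fix X assume "germ d X" "M \<subseteq> X"
    with M(2) show "X = M" by (intro max) auto
  qed
qed

lemma germ_insert_polar:
  assumes "CARD('n) = d^2" "d \<ge> 2" "in_ball d \<subseteq> G" "range (basis_dist d) \<subseteq> G"
    and "germ d A" "G \<subseteq> A" "u \<in> polar d A"
  shows "germ d (insert u (A :: (real^'n::finite) set))"
proof (rule germ_if_subset_polar[OF assms(1-4)])
  show "insert u A \<subseteq> polar d G"
    using assms(7) polar_antimono[OF assms(6)] germ_subset_polar[OF assms(5)] by blast
  have hyp: "u \<in> hyp" and uA: "\<And>q. q \<in> A \<Longrightarrow> 1 / (real d * (real d + 1)) \<le> inner u q"
    using assms(7) by (auto simp: polar_def)
  fix p q assume "p \<in> insert u A" "q \<in> insert u A"
  then consider "p = u" "q = u" | "p = u" "q \<in> A" | "p \<in> A" "q = u" | "p \<in> A" "q \<in> A"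
    by blast
  then show "1 / (real d * (real d + 1)) \<le> inner p q"
  proof cases
    case 1
    with inner_self_hyp_ge[OF assms(1) hyp] show ?thesis by simp
  next
    case 2
    with uA show ?thesis by simp
  next
    case 3
    with uA show ?thesis by (simp add: inner_commute)
  next
    case 4
    with assms(5) show ?thesis unfolding germ_def by blast
  qed
qed

lemma maximal_germ_is_qplex:
  assumes "CARD('n) = d^2" "d \<ge> 2" "in_ball d \<subseteq> G" "range (basis_dist d) \<subseteq> G"
    and "germ d M" "G \<subseteq> M" "\<And>X. germ d X \<Longrightarrow> M \<subseteq> X \<Longrightarrow> X = M"
  shows "qplex d (M :: (real^'n::finite) set)"
proof -
  have "polar d M \<subseteq> M"
  proof
    fix u assume "u \<in> polar d M"
    with germ_insert_polar[OF assms(1-6)] have "germ d (insert u M)" .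
    then show "u \<in> M" using assms(7) by blast
  qed
  then show ?thesis
    using germ_subset_polar[OF assms(5)] germ_subset_out_ball[OF assms(1,5)]
    by (auto simp: qplex_def)
qed

lemma polar_witness_cutting_ray:
  assumes "CARD('n) = d^2" "closed G" "convex G" "G \<subseteq> hyp" "centre d \<in> G"
    and "p \<in> hyp" "p \<notin> G"
  obtains w :: "real^'n::finite" where "w \<in> polar d G"
    "\<And>t. inner w (centre d + t *\<^sub>R (p - centre d)) = 1 / (real d)^2 - t / ((real d)^2 * (real d + 1))"
proof -
  let ?c = "centre d :: real^'n"
  define \<gamma> where "\<gamma> = 1 / ((real d)^2 * (real d + 1))"
  have "d > 0" using pos_if_CARD_eq_sq[OF assms(1)] .
  obtain a b where ab: "inner a p < b" "\<And>x. x \<in> G \<Longrightarrow> b < inner a x"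
    using separating_hyperplane_closed_point[OF assms(3,2,7)] by blast
  define L where "L = inner a p - inner a ?c"
  have "L < 0" using ab assms(5) by (fastforce simp: L_def)
  have "\<gamma> > 0" using \<open>d > 0\<close> by (simp add: \<gamma>_def)
  obtain w where w: "w \<in> hyp"
    "\<And>x. x \<in> hyp \<Longrightarrow> inner w x = 1 / (real d)^2 + (\<gamma> / - L) * (inner a x - inner a ?c)"
    using hyp_represents_affine_functional[OF assms(1)] by blast
  have ray: "inner w (?c + t *\<^sub>R (p - ?c)) = 1 / (real d)^2 - t * \<gamma>" for t
  proof -
    have "inner a (?c + t *\<^sub>R (p - ?c)) - inner a ?c = t * L"
      by (simp add: L_def inner_add_right inner_diff_right)
    moreover have "(\<gamma> / - L) * (t * L) = - (t * \<gamma>)"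
      using \<open>L < 0\<close> by (simp add: field_simps)
    ultimately show ?thesis
      using w(2)[OF centre_ray_in_hyp[OF assms(1,6)]] by simp
  qed
  have "1 / (real d * (real d + 1)) \<le> inner w x" if "x \<in> G" for x
  proof -
    have "(\<gamma> / - L) * L < (\<gamma> / - L) * (inner a x - inner a ?c)"
      using ab(1) ab(2)[OF that] \<open>L < 0\<close> \<open>\<gamma> > 0\<close>
      by (intro mult_strict_left_mono) (auto simp: L_def)
    then have "1 / (real d)^2 - \<gamma> < inner w x"
      using w(2) that assms(4) \<open>L < 0\<close> by auto
    moreover have "1 / (real d)^2 - \<gamma> = 1 / (real d * (real d + 1))"
      using \<open>d > 0\<close> centre_gap_eq[of "real d"] by (simp add: \<gamma>_def)
    ultimately show ?thesis by simp
  qed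
  with w(1) have "w \<in> polar d G" by (simp add: polar_def)
  with ray show ?thesis
    using that by (simp add: \<gamma>_def)
qed

lemma qplex_through_point_excluding_ray:
  assumes "CARD('n) = d^2" "d \<ge> 2" "closed G" "convex G" "germ d G"
    and "in_ball d \<subseteq> G" "range (basis_dist d) \<subseteq> G"
    and "p \<in> polar d G" "p \<notin> G"
  obtains M :: "(real^'n::finite) set" where "qplex d M" "G \<subseteq> M" "p \<in> M"
    "\<And>t. t > 1 \<Longrightarrow> centre d + t *\<^sub>R (p - centre d) \<notin> M"
proof -
  define \<alpha> where "\<alpha> = 1 / (real d * (real d + 1))"
  define \<gamma> where "\<gamma> = 1 / ((real d)^2 * (real d + 1))"
  have gap: "1 / (real d)^2 - \<gamma> = \<alpha>" "\<gamma> > 0"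
    using assms(2) centre_gap_eq[of "real d"] by (simp_all add: \<alpha>_def \<gamma>_def)
  have "G \<subseteq> hyp"
    using assms(5) by (auto simp: germ_def prob_simplex_def hyp_def)
  moreover have "p \<in> hyp" using assms(8) by (simp add: polar_def)
  moreover have "centre d \<in> G" using centre_in_in_ball[OF assms(1)] assms(6) by blast
  ultimately obtain w where w: "w \<in> polar d G"
    "\<And>t. inner w (centre d + t *\<^sub>R (p - centre d)) = 1 / (real d)^2 - t * \<gamma>"
    using polar_witness_cutting_ray[OF assms(1,3,4) _ _ _ assms(9)] by (auto simp: \<gamma>_def)
  have "germ d (insert w G)"
    using germ_insert_polar[OF assms(1,2,6,7,5) order_refl w(1)] .
  moreover have "inner p w = \<alpha>" using w(2)[of 1] gap by (simp add: inner_commute)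
  then have "p \<in> polar d (insert w G)" using assms(8) by (simp add: polar_def \<alpha>_def)
  ultimately have "germ d (insert p (insert w G))"
    using germ_insert_polar[OF assms(1,2,6,7)] by blast
  then obtain M where M: "germ d M" "insert p (insert w G) \<subseteq> M"
    "\<And>X. germ d X \<Longrightarrow> M \<subseteq> X \<Longrightarrow> X = M"
    using maximal_germ_exists by metis
  then have "qplex d M"
    by (intro maximal_germ_is_qplex[OF assms(1,2,6,7)]) auto
  moreover have "centre d + t *\<^sub>R (p - centre d) \<notin> M" if "t > 1" for t
  proof
    assume "centre d + t *\<^sub>R (p - centre d) \<in> M"
    then have "\<alpha> \<le> inner w (centre d + t *\<^sub>R (p - centre d))"
      using \<open>qplex d M\<close> M(2) by (auto simp: qplex_def polar_def \<alpha>_def inner_commute)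
    moreover have "\<gamma> < t * \<gamma>" using gap(2) that by simp
    ultimately show False using w(2) gap(1) by simp
  qed
  ultimately show ?thesis
    using that M(2) by simp
qed

lemma subset_closed_conv: "X \<subseteq> closed_conv X"
  unfolding closed_conv_def by (meson closure_subset hull_subset subset_trans)

lemma uncountable_segment_outside_closed:
  fixes c u :: "'a::real_normed_vector"
  assumes "closed G" "u \<notin> G"
  shows "uncountable {s \<in> {0<..1}. c + s *\<^sub>R (u - c) \<notin> G}"
proof -
  have "open ((\<lambda>s. c + s *\<^sub>R (u - c)) -` (- G))"
    using assms(1) by (intro continuous_open_vimage) (auto intro!: continuous_intros)
  moreover have "1 \<in> (\<lambda>s. c + s *\<^sub>R (u - c)) -` (- G)" using assms(2) by simp
  ultimately obtain e where "e > 0" "ball 1 e \<subseteq> (\<lambda>s. c + s *\<^sub>R (u - c)) -` (- G)"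
    by (meson open_contains_ball)
  then have "{max 0 (1 - e)<..1} \<subseteq> {s \<in> {0<..1}. c + s *\<^sub>R (u - c) \<notin> G}"
    by (auto simp: dist_real_def subset_iff)
  moreover have "uncountable {max 0 (1 - e)<..1::real}"
    using \<open>e > 0\<close> by (simp add: uncountable_half_open_interval_2)
  ultimately show ?thesis using countable_subset by blast
qed

lemma uncountable_if_separating_members:
  fixes S :: "'b::linorder set" and x :: "'b \<Rightarrow> 'a"
  assumes "uncountable S"
    and "\<And>s. s \<in> S \<Longrightarrow> \<exists>M\<in>Q. x s \<in> M \<and> (\<forall>t\<in>S. s < t \<longrightarrow> x t \<notin> M)"
  shows "uncountable Q"
proof -
  have "\<forall>s\<in>S. \<exists>M. M \<in> Q \<and> x s \<in> M \<and> (\<forall>t\<in>S. s < t \<longrightarrow> x t \<notin> M)"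
    using assms(2) by blast
  then obtain F where F: "\<forall>s\<in>S. F s \<in> Q \<and> x s \<in> F s \<and> (\<forall>t\<in>S. s < t \<longrightarrow> x t \<notin> F s)"
    by (metis bchoice)
  have "inj_on F S"
  proof (rule inj_onI)
    fix s t assume st: "s \<in> S" "t \<in> S" "F s = F t"
    show "s = t"
    proof (rule ccontr)
      assume "s \<noteq> t"
      then consider "s < t" | "t < s" by fastforce
      then show False
        using F st by cases auto
    qed
  qed
  moreover have "F ` S \<subseteq> Q" using F by blast
  ultimately show ?thesis
    using assms(1) countable_image_inj_on[of F S] countable_subset[of "F ` S" Q] by blast
qed

lemma uncountable_qplexes_above_non_self_polar:
  assumes "CARD('n) = d^2" "d \<ge> 2" "closed G" "convex G" "germ d G"
    and "in_ball d \<subseteq> G" "range (basis_dist d) \<subseteq> G"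
    and "u \<in> polar d G" "u \<notin> G"
  shows "uncountable {Q :: (real^'n::finite) set. qplex d Q \<and> G \<subseteq> Q}"
proof -
  define x where "x s = centre d + s *\<^sub>R (u - centre d)" for s
  define S where "S = {s \<in> {0<..1}. x s \<notin> G}"
  have "centre d \<in> polar d G"
    using centre_in_in_ball[OF assms(1)] assms(6) germ_subset_polar[OF assms(5)] by auto
  then have x_polar: "x s \<in> polar d G" if "s \<in> S" for s
    using that convexD[OF convex_polar _ assms(8), of "centre d" "1 - s" s]
    by (simp add: S_def x_def algebra_simps)
  have "\<exists>M\<in>{Q. qplex d Q \<and> G \<subseteq> Q}. x s \<in> M \<and> (\<forall>t\<in>S. s < t \<longrightarrow> x t \<notin> M)"
    if s: "s \<in> S" for s
  proof -
    obtain M where M: "qplex d M" "G \<subseteq> M" "x s \<in> M"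
      "\<And>r. r > 1 \<Longrightarrow> centre d + r *\<^sub>R (x s - centre d) \<notin> M"
      using qplex_through_point_excluding_ray[OF assms(1-7) x_polar[OF s]] s by (auto simp: S_def)
    have "x t \<notin> M" if "t \<in> S" "s < t" for t
    proof -
      have "x t = centre d + (t / s) *\<^sub>R (x s - centre d)"
        using s by (simp add: x_def S_def)
      moreover have "t / s > 1" using s that by (simp add: S_def)
      ultimately show ?thesis using M(4) by simp
    qed
    with M(1-3) show ?thesis by blast
  qed
  moreover have "uncountable S"
    unfolding S_def x_def by (rule uncountable_segment_outside_closed[OF assms(3,9)])
  ultimately show ?thesis
    by (intro uncountable_if_separating_members[of S _ x]) auto
qed

theorem mainTheorem5:
  fixes d :: nat and G :: "(real^'n::finite) set"
  assumes "d \<ge> 2"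
    and "CARD('n) = d^2"
    and "closed G" and "convex G" and "germ d G"
    and "closed_conv (basis_simplex d \<union> in_ball d) \<subseteq> G"
    and "\<not> qplex d G"
  shows "uncountable {Q :: (real^'n) set. qplex d Q \<and> G \<subseteq> Q}"
proof -
  have "basis_simplex d \<union> in_ball d \<subseteq> G"
    using assms(6) subset_closed_conv by blast
  moreover have "range (basis_dist d) \<subseteq> basis_simplex d"
    unfolding basis_simplex_def by (rule hull_subset)
  ultimately have in_ball: "in_ball d \<subseteq> G" and basis: "range (basis_dist d) \<subseteq> G"
    by auto
  have "polar d G \<noteq> G"
    using assms(7) germ_subset_out_ball[OF assms(2,5)] by (auto simp: qplex_def)
  then obtain u where "u \<in> polar d G" "u \<notin> G"
    using germ_subset_polar[OF assms(5)] by blast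
  then show ?thesis
    by (rule uncountable_qplexes_above_non_self_polar[OF assms(2,1,3-5) in_ball basis])
qed

end
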